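(* For partitions $\lambda$ and $\mu$, $h_\lambda[\Xi_\mu]=|\mathcal C_{\lambda,\mu}|$, where $\mathcal C_{\lambda,\mu}$ is the set of sequences $(\alpha^{(1)},\ldots,\alpha^{(\ell(\lambda))})$ of weak compositions such that $\alpha^{(i)}$ is a weak composition of $\lambda_i$ of length $\ell(\mu)$ and $\mu_j$ divides $\alpha^{(i)}_j$ for all $1\le i\le\ell(\lambda)$, $1\le j\le\ell(\mu)$.
   Context: A weak composition of $m$ of length $\ell$ is a sequence of $\ell$ nonnegative integers summing to $m$. For $f\in Sym$ and a partition $\mu$, $f[\Xi_\mu]$ denotes $f$ evaluated at the multiset of eigenvalues of a permutation matrix of cycle type $\mu$ (the $\mu_i$-th roots of unity for each part $\mu_i$); equivalently substitute $p_k\mapsto\sum_{d\mid k}d\,m_d(\mu)$. $h_\lambda=h_{\lambda_1}\cdots h_{\lambda_{\ell(\lambda)}}$. *)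

theory Defs
  imports Complex_Main
begin

definition is_partition :: "nat list \<Rightarrow> bool" where
  "is_partition lam \<longleftrightarrow> sorted_wrt (\<ge>) lam \<and> (\<forall>x\<in>set lam. 0 < x)"

definition weak_comps :: "nat \<Rightarrow> nat \<Rightarrow> nat list set" where
  "weak_comps m l = {a. length a = l \<and> sum_list a = m}"

text \<open>The multiset (as a list) of eigenvalues of a permutation matrix of cycle type \<open>\<mu>\<close>:
  for each part \<open>\<mu>_j\<close>, all \<open>\<mu>_j\<close>-th roots of unity.\<close>
definition Xi :: "nat list \<Rightarrow> complex list" where
  "Xi mu = concat (map (\<lambda>m. map (\<lambda>k. cis (2 * pi * real k / real m)) [0..<m]) mu)"

definition h_eval :: "nat \<Rightarrow> complex list \<Rightarrow> complex" where
  "h_eval n xs = (\<Sum>b\<in>weak_comps n (length xs). \<Prod>i<length xs. (xs ! i) ^ (b ! i))"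

definition h_part_eval :: "nat list \<Rightarrow> complex list \<Rightarrow> complex" where
  "h_part_eval lam xs = (\<Prod>i<length lam. h_eval (lam ! i) xs)"

definition C_set :: "nat list \<Rightarrow> nat list \<Rightarrow> nat list list set" where
  "C_set lam mu = {as. length as = length lam \<and>
     (\<forall>i<length lam. as ! i \<in> weak_comps (lam ! i) (length mu) \<and>
        (\<forall>j<length mu. mu ! j dvd (as ! i) ! j))}"

end

theory Submission
  imports Defs "HOL-Computational_Algebra.Computational_Algebra"
begin

text \<open>Take generating functions in an auxiliary variable \<open>t\<close>. Since \<open>\<Sum>\<^sub>n h\<^sub>n(x\<^sub>1,\<dots>,x\<^sub>N) t\<^sup>n = \<Prod>\<^sub>i 1/(1 - x\<^sub>i t)\<close>
  and the \<open>m\<close>-th roots of unity satisfy \<open>\<Prod>\<^sub>\<zeta> (1 - \<zeta> t) = 1 - t\<^sup>m\<close>, the eigenvalues of one \<open>m\<close>-cycle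
  contribute the factor \<open>1/(1 - t\<^sup>m) = \<Sum>\<^bsub>m dvd a\<^esub> t\<^sup>a\<close>. Hence \<open>h\<^sub>n[\<Xi>\<^sub>\<mu>]\<close> counts the weak compositions
  of \<open>n\<close> whose \<open>j\<close>-th entry is divisible by \<open>\<mu>\<^sub>j\<close>, and \<open>h\<^sub>\<lambda>[\<Xi>\<^sub>\<mu>]\<close> is the product of these counts
  over the parts of \<open>\<lambda>\<close>, which is \<open>|C\<^sub>\<lambda>\<^sub>,\<^sub>\<mu>|\<close>.\<close>

abbreviation root_of_unity :: "nat \<Rightarrow> nat \<Rightarrow> complex" where
  "root_of_unity m k \<equiv> cis (2 * pi * real k / real m)"

lemma finite_weak_comps: "finite (weak_comps n l)"
proof (rule finite_subset)
  show "weak_comps n l \<subseteq> {xs. set xs \<subseteq> {0..n} \<and> length xs = l}"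
    by (auto simp: weak_comps_def member_le_sum_list)
qed (simp add: finite_lists_length_eq)

lemma weak_comps_0: "weak_comps n 0 = (if n = 0 then {[]} else {})"
  by (auto simp: weak_comps_def)

lemma weak_comps_Suc: "weak_comps n (Suc l) = (\<Union>a\<le>n. (#) a ` weak_comps (n - a) l)"
  unfolding weak_comps_def
  by (auto simp: length_Suc_conv image_iff intro!: bexI[where x="hd _"])

lemma sum_weak_comps_Suc:
  "(\<Sum>c\<in>weak_comps n (Suc l). F c) = (\<Sum>a\<le>n. \<Sum>c\<in>weak_comps (n - a) l. F (a # c))"
  unfolding weak_comps_Suc
  by (subst sum.UNION_disjoint) (auto simp: finite_weak_comps sum.reindex)

lemma fps_nth_prod_list_Abs_fps:
  fixes fs :: "(nat \<Rightarrow> 'a :: comm_semiring_1) list"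
  shows "(\<Prod>f\<leftarrow>fs. Abs_fps f) $ n
           = (\<Sum>c\<in>weak_comps n (length fs). \<Prod>j<length fs. (fs ! j) (c ! j))"
proof (induction fs arbitrary: n)
  case Nil
  show ?case by (simp add: weak_comps_0)
next
  case (Cons f fs)
  have "(\<Prod>g\<leftarrow>f # fs. Abs_fps g) $ n = (\<Sum>a\<le>n. f a * (\<Prod>g\<leftarrow>fs. Abs_fps g) $ (n - a))"
    by (simp add: fps_mult_nth atLeast0AtMost)
  also have "\<dots> = (\<Sum>a\<le>n. \<Sum>c\<in>weak_comps (n - a) (length fs).
                     \<Prod>j<Suc (length fs). ((f # fs) ! j) ((a # c) ! j))"
    by (simp add: Cons.IH sum_distrib_left prod.lessThan_Suc_shift del: prod.lessThan_Suc)
  also have "\<dots> = (\<Sum>c\<in>weak_comps n (length (f # fs)). \<Prod>j<length (f # fs). ((f # fs) ! j) (c ! j))"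
    by (simp add: sum_weak_comps_Suc)
  finally show ?case .
qed

lemma h_eval_eq_fps_nth: "h_eval n xs = (\<Prod>x\<leftarrow>xs. Abs_fps (\<lambda>k. x ^ k)) $ n"
proof -
  have "h_eval n xs = (\<Prod>f\<leftarrow>map (\<lambda>x k. x ^ k) xs. Abs_fps f) $ n"
    unfolding fps_nth_prod_list_Abs_fps h_eval_def by simp
  then show ?thesis
    by (simp add: o_def)
qed

definition dvd_comps :: "nat \<Rightarrow> nat list \<Rightarrow> nat list set" where
  "dvd_comps n mu = {c \<in> weak_comps n (length mu). \<forall>j<length mu. mu ! j dvd c ! j}"

lemma prod_of_bool: "(\<Prod>j<(l::nat). of_bool (P j)) = (of_bool (\<forall>j<l. P j) :: 'a :: comm_semiring_1)"
  by (induction l) (auto simp: less_Suc_eq)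

lemma fps_nth_prod_dvd_indicators:
  "(\<Prod>m\<leftarrow>mu. Abs_fps (\<lambda>n. of_bool (m dvd n))) $ n = (of_nat (card (dvd_comps n mu)) :: 'a :: comm_semiring_1)"
proof -
  have "(\<Prod>f\<leftarrow>map (\<lambda>m n. of_bool (m dvd n)) mu. Abs_fps f) $ n
          = (\<Sum>c\<in>weak_comps n (length mu). of_bool (\<forall>j<length mu. mu ! j dvd c ! j) :: 'a)"
    unfolding fps_nth_prod_list_Abs_fps by (simp add: prod_of_bool)
  also have "\<dots> = of_nat (card (dvd_comps n mu))"
    by (simp add: finite_weak_comps dvd_comps_def Int_def)
  finally show ?thesis
    by (simp add: o_def)
qed

lemma geometric_fps_X_power_mult:
  fixes x :: "'a :: comm_ring_1"
  assumes "m > 0"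
  shows "Abs_fps (\<lambda>n. of_bool (m dvd n) * x ^ (n div m)) * (1 - fps_const x * fps_X ^ m) = 1"
    (is "?F * _ = 1")
proof (rule fps_ext)
  fix n
  have "(?F * (1 - fps_const x * fps_X ^ m)) $ n = ?F $ n - x * (?F * fps_X ^ m) $ n"
    by (simp add: algebra_simps)
  also have "\<dots> = 1 $ n"
  proof (cases "n < m")
    case True
    then show ?thesis
      using assms by (cases "n = 0") (auto simp: fps_X_power_mult_right_nth dest: nat_dvd_not_less)
  next
    case False
    then have "m dvd n \<longleftrightarrow> m dvd n - m" and "n div m = Suc ((n - m) div m)"
      using assms by (simp_all add: dvd_minus_self le_div_geq)
    with False assms show ?thesis by (simp add: fps_X_power_mult_right_nth)
  qed
  finally show "(?F * (1 - fps_const x * fps_X ^ m)) $ n = 1 $ n" .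
qed

lemma prod_one_minus_roots_unity_poly:
  assumes m: "m > 0"
  shows "(\<Prod>k<m. [:1, - root_of_unity m k:]) = 1 - monom 1 m"
proof (rule poly_eqI_degree[where A = "insert 0 {w. w ^ m = 1}"])
  have card_A: "card (insert (0::complex) {w. w ^ m = 1}) = Suc m"
    using m by (subst card_insert_disjoint) (auto simp: card_roots_unity_eq finite_roots_unity power_0_left)
  have "degree (\<Prod>k<m. [:1, - root_of_unity m k:]) \<le> (\<Sum>k<m. degree [:1, - root_of_unity m k:])"
    using degree_prod_sum_le[of "{..<m}" "\<lambda>k. [:1, - root_of_unity m k:]"] by (simp add: o_def)
  also have "\<dots> \<le> m"
    using sum_mono[of "{..<m}" "\<lambda>k. degree [:1, - root_of_unity m k:]" "\<lambda>_. 1"] by simp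
  finally show "degree (\<Prod>k<m. [:1, - root_of_unity m k:]) < card (insert (0::complex) {w. w ^ m = 1})"
    using card_A by simp
  have "degree (1 - monom (1::complex) m) \<le> m"
    using degree_diff_le_max[of 1 "monom (1::complex) m"] by (simp add: degree_monom_eq)
  then show "degree (1 - monom (1::complex) m) < card (insert (0::complex) {w. w ^ m = 1})"
    using card_A by simp
  fix w :: complex
  assume w: "w \<in> insert 0 {w. w ^ m = 1}"
  show "poly (\<Prod>k<m. [:1, - root_of_unity m k:]) w = poly (1 - monom 1 m) w"
  proof (cases "w = 0")
    case True
    then show ?thesis using m by (simp add: poly_prod poly_monom)
  next
    case False
    with w have "w ^ m = 1" by simp
    moreover from this have "(1 / w) ^ m = 1" by (simp add: power_divide)
    then obtain k where "k < m" "root_of_unity m k = 1 / w"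
      using bij_betw_roots_unity[OF m] unfolding bij_betw_def by force
    then have "poly (\<Prod>k<m. [:1, - root_of_unity m k:]) w = 0"
      using False by (auto simp: poly_prod intro!: bexI[of _ k])
    ultimately show ?thesis by (simp add: poly_monom)
  qed
qed

lemma prod_one_minus_roots_unity_fps:
  assumes "m > 0"
  shows "(\<Prod>k<m. 1 - fps_const (root_of_unity m k) * fps_X) = 1 - fps_X ^ m"
proof -
  have linear: "fps_of_poly [:1, - c:] = 1 - fps_const c * fps_X" for c :: complex
    by (rule fps_ext) (simp add: fps_of_poly_nth coeff_pCons split: nat.split)
  have "fps_of_poly (\<Prod>k<m. [:1, - root_of_unity m k:]) = fps_of_poly (1 - monom 1 m)"
    using prod_one_minus_roots_unity_poly[OF assms] by simp
  then show ?thesis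
    by (simp only: fps_of_poly_prod fps_of_poly_diff fps_of_poly_monom' fps_of_poly_1 linear)
qed

lemma prod_geometric_fps_roots_unity:
  assumes "m > 0"
  shows "(\<Prod>k<m. Abs_fps (\<lambda>n. root_of_unity m k ^ n)) = Abs_fps (\<lambda>n. of_bool (m dvd n))"
proof -
  have geometric: "Abs_fps (\<lambda>n. x ^ n) * (1 - fps_const x * fps_X) = 1" for x :: complex
    using geometric_fps_X_power_mult[of 1 x] by simp
  have "(1 - fps_X ^ m) * (\<Prod>k<m. Abs_fps (\<lambda>n. root_of_unity m k ^ n))
          = (\<Prod>k<m. Abs_fps (\<lambda>n. root_of_unity m k ^ n)
                      * (1 - fps_const (root_of_unity m k) * fps_X))"
    unfolding prod_one_minus_roots_unity_fps[OF assms, symmetric] prod.distrib by (rule mult.commute)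
  also have "\<dots> = 1"
    by (intro prod.neutral ballI geometric)
  finally have "(1 - fps_X ^ m) * (\<Prod>k<m. Abs_fps (\<lambda>n. root_of_unity m k ^ n)) = 1" .
  moreover have "Abs_fps (\<lambda>n. of_bool (m dvd n) :: complex) * (1 - fps_X ^ m) = 1"
    using geometric_fps_X_power_mult[OF assms, of 1] by simp
  ultimately show ?thesis
    using fps_inverse_unique[of "1 - fps_X ^ m"] by (metis mult.commute)
qed

lemma prod_geometric_fps_Xi:
  assumes "0 \<notin> set mu"
  shows "(\<Prod>x\<leftarrow>Xi mu. Abs_fps (\<lambda>n. x ^ n)) = (\<Prod>m\<leftarrow>mu. Abs_fps (\<lambda>n. of_bool (m dvd n)))"
  using assms
proof (induction mu)
  case Nil
  show ?case by (simp add: Xi_def)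
next
  case (Cons m mu)
  have "(\<Prod>x\<leftarrow>Xi (m # mu). Abs_fps (\<lambda>n. x ^ n))
          = (\<Prod>k<m. Abs_fps (\<lambda>n. root_of_unity m k ^ n)) * (\<Prod>x\<leftarrow>Xi mu. Abs_fps (\<lambda>n. x ^ n))"
    by (simp add: Xi_def prod.distinct_set_conv_list[symmetric] atLeast0LessThan)
  with Cons show ?case
    by (simp add: prod_geometric_fps_roots_unity)
qed

lemma h_eval_Xi:
  assumes "0 \<notin> set mu"
  shows "h_eval n (Xi mu) = of_nat (card (dvd_comps n mu))"
  by (simp add: h_eval_eq_fps_nth prod_geometric_fps_Xi[OF assms] fps_nth_prod_dvd_indicators)

lemma card_lists_nth_mem:
  assumes "\<forall>n\<in>set ns. finite (T n)"
  shows "card {xs. length xs = length ns \<and> (\<forall>i<length ns. xs ! i \<in> T (ns ! i))} = (\<Prod>n\<leftarrow>ns. card (T n))"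
  using assms
proof (induction ns)
  case Nil
  show ?case by simp
next
  case (Cons n ns)
  let ?L = "\<lambda>ns. {xs. length xs = length ns \<and> (\<forall>i<length ns. xs ! i \<in> T (ns ! i))}"
  have "?L (n # ns) = (\<lambda>(x, xs). x # xs) ` (T n \<times> ?L ns)"
    by (fastforce simp: length_Suc_conv nth_Cons split: nat.splits)
  then have "card (?L (n # ns)) = card (T n \<times> ?L ns)"
    by (simp add: card_image inj_on_def)
  with Cons show ?case
    by (simp add: card_cartesian_product)
qed

theorem proposition29:
  fixes lam mu :: "nat list"
  assumes "is_partition lam" and "is_partition mu"
  shows "h_part_eval lam (Xi mu) = of_nat (card (C_set lam mu))"
proof -
  have parts_pos: "0 \<notin> set mu"
    using assms(2) by (auto simp: is_partition_def)
  have C_set_eq: "C_set lam mu = {as. length as = length lam \<and> (\<forall>i<length lam. as ! i \<in> dvd_comps (lam ! i) mu)}"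
    by (auto simp: C_set_def dvd_comps_def)
  have "card (C_set lam mu) = (\<Prod>n\<leftarrow>lam. card (dvd_comps n mu))"
    unfolding C_set_eq by (rule card_lists_nth_mem) (simp add: finite_weak_comps dvd_comps_def)
  then show ?thesis
    by (simp add: h_part_eval_def h_eval_Xi[OF parts_pos] prod.list_conv_set_nth atLeast0LessThan)
qed

end
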